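(* Let $f: X \to Y$ be a continuous surjection which is open, closed and finite-to-one (each fiber $f^{-1}(y)$ is finite), where $Y$ is set strongly star Hurewicz. Then $X$ is nearly set strongly star Hurewicz.
   Context: For a subset $A$ of a space $X$ and a collection $\mathcal{U}$ of subsets of $X$, ${\rm St}(A,\mathcal{U}) = \bigcup\{U \in \mathcal{U}: U \cap A \neq \emptyset\}$. A space $Y$ is set strongly star Hurewicz if for each nonempty $B \subset Y$ and each sequence $(\mathcal{V}_n: n\in\mathbb{N})$ of collections of sets open in $Y$ with $\overline{B} \subset \bigcup\mathcal{V}_n$ for all $n$, there are finite sets $F_n \subset \overline{B}$ such that each $y \in B$ lies in ${\rm St}(F_n,\mathcal{V}_n)$ for all but finitely many $n$. A space $X$ is nearly set strongly star Hurewicz if for each nonempty $A \subset X$ and each sequence $(\mathcal{U}_n: n \in \mathbb{N})$ of open covers of $X$ there is a sequence $(F_n: n\in\mathbb{N})$ of finite subsets of $X$ such that each $x \in A$ lies in ${\rm St}(F_n,\mathcal{U}_n)$ for all but finitely many $n$. *)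

theory Defs
  imports "HOL-Analysis.Analysis"
begin

definition St :: "'a set \<Rightarrow> 'a set set \<Rightarrow> 'a set" where
  "St A \<U> = \<Union>{U \<in> \<U>. U \<inter> A \<noteq> {}}"

definition set_strongly_star_Hurewicz :: "'a topology \<Rightarrow> bool" where
  "set_strongly_star_Hurewicz Y \<longleftrightarrow>
     (\<forall>B \<V>. B \<noteq> {} \<and> B \<subseteq> topspace Y \<and>
        (\<forall>n. (\<forall>V\<in>\<V> n. openin Y V) \<and> Y closure_of B \<subseteq> \<Union>(\<V> n)) \<longrightarrow>
        (\<exists>F. (\<forall>n. finite (F n) \<and> F n \<subseteq> Y closure_of B) \<and>
             (\<forall>y\<in>B. \<forall>\<^sub>F n in sequentially. y \<in> St (F n) (\<V> n))))"

definition nearly_set_strongly_star_Hurewicz :: "'a topology \<Rightarrow> bool" where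
  "nearly_set_strongly_star_Hurewicz X \<longleftrightarrow>
     (\<forall>A \<U>. A \<noteq> {} \<and> A \<subseteq> topspace X \<and>
        (\<forall>n. (\<forall>U\<in>\<U> n. openin X U) \<and> \<Union>(\<U> n) = topspace X) \<longrightarrow>
        (\<exists>F. (\<forall>n. finite (F n) \<and> F n \<subseteq> topspace X) \<and>
             (\<forall>x\<in>A. \<forall>\<^sub>F n in sequentially. x \<in> St (F n) (\<U> n))))"

end

theory Submission
  imports Defs
begin

text \<open>Given open covers \<open>\<U>\<^sub>n\<close> of \<open>X\<close>, every \<open>y \<in> Y\<close> has an open neighbourhood \<open>V\<close> whose
  preimage lies in the union of finitely many members of \<open>\<U>\<^sub>n\<close> (one per point of the finite
  fibre, using that \<open>f\<close> is closed) and which lies in the image of each of them (using that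
  \<open>f\<close> is open). Applying the set strongly star Hurewicz property of \<open>Y\<close> to \<open>f(A)\<close> and these
  neighbourhoods, the finite preimages of the resulting finite sets witness the property for \<open>A\<close>.\<close>

definition liftable :: "'a topology \<Rightarrow> ('a \<Rightarrow> 'b) \<Rightarrow> 'a set set \<Rightarrow> 'b set \<Rightarrow> bool" where
  "liftable X f \<U> V \<longleftrightarrow>
     (\<exists>\<W>\<subseteq>\<U>. {x \<in> topspace X. f x \<in> V} \<subseteq> \<Union>\<W> \<and> (\<forall>W\<in>\<W>. V \<subseteq> f ` W))"

lemma liftable_neighbourhood:
  assumes "open_map X Y f" and "closed_map X Y f"
    and "finite {x \<in> topspace X. f x = y}" and "y \<in> topspace Y"
    and "\<And>U. U \<in> \<U> \<Longrightarrow> openin X U" and "\<Union>\<U> = topspace X"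
  obtains V where "openin Y V" "y \<in> V" "liftable X f \<U> V"
proof -
  define fib where "fib = {x \<in> topspace X. f x = y}"
  have "\<forall>x\<in>fib. \<exists>U\<in>\<U>. x \<in> U"
    using assms(6) unfolding fib_def by blast
  then obtain C where C: "\<And>x. x \<in> fib \<Longrightarrow> C x \<in> \<U> \<and> x \<in> C x"
    by metis
  define \<W> where "\<W> = C ` fib"
  define V where "V = (\<Inter>W\<in>\<W>. f ` W) \<inter> topspace Y \<inter> (topspace Y - f ` (topspace X - \<Union>\<W>))"
  have "\<W> \<subseteq> \<U>" "finite \<W>"
    using C assms(3) unfolding \<W>_def fib_def by auto
  then have open_images: "openin Y ((\<Inter>W\<in>\<W>. f ` W) \<inter> topspace Y)"
    using assms(1,5) by (intro openin_INT) (auto simp: open_map_def)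
  have "closedin Y (f ` (topspace X - \<Union>\<W>))"
    using assms(2,5) \<open>\<W> \<subseteq> \<U>\<close> unfolding closed_map_def by blast
  then have "openin Y (topspace Y - f ` (topspace X - \<Union>\<W>))"
    by blast
  with open_images have "openin Y V"
    unfolding V_def by (rule openin_Int)
  moreover have "y \<in> V"
    using C assms(4) unfolding V_def \<W>_def fib_def by auto
  moreover have "liftable X f \<U> V"
    unfolding liftable_def V_def using \<open>\<W> \<subseteq> \<U>\<close> by blast
  ultimately show thesis
    using that by blast
qed

lemma liftable_open_sets_cover:
  assumes "open_map X Y f" and "closed_map X Y f"
    and "\<And>y. y \<in> topspace Y \<Longrightarrow> finite {x \<in> topspace X. f x = y}"
    and "\<And>U. U \<in> \<U> \<Longrightarrow> openin X U" and "\<Union>\<U> = topspace X"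
  shows "topspace Y \<subseteq> \<Union>{V. openin Y V \<and> liftable X f \<U> V}"
proof
  fix y
  assume y: "y \<in> topspace Y"
  obtain V where "openin Y V" "y \<in> V" "liftable X f \<U> V"
    using liftable_neighbourhood[OF assms(1,2) assms(3)[OF y] y assms(4,5)] .
  then show "y \<in> \<Union>{V. openin Y V \<and> liftable X f \<U> V}"
    by blast
qed

lemma St_memI: "W \<in> \<U> \<Longrightarrow> q \<in> F \<Longrightarrow> q \<in> W \<Longrightarrow> x \<in> W \<Longrightarrow> x \<in> St F \<U>"
  unfolding St_def by blast

lemma St_preimage_liftable:
  assumes "x \<in> topspace X" and "f x \<in> St F \<V>"
    and "\<And>V. V \<in> \<V> \<Longrightarrow> liftable X f \<U> V"
    and "\<And>U. U \<in> \<U> \<Longrightarrow> U \<subseteq> topspace X"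
  shows "x \<in> St {q \<in> topspace X. f q \<in> F} \<U>"
proof -
  obtain V p where V: "V \<in> \<V>" "f x \<in> V" and p: "p \<in> V" "p \<in> F"
    using assms(2) unfolding St_def by auto
  obtain \<W> where "\<W> \<subseteq> \<U>" and cover: "{x \<in> topspace X. f x \<in> V} \<subseteq> \<Union>\<W>"
    and onto: "\<And>W. W \<in> \<W> \<Longrightarrow> V \<subseteq> f ` W"
    using assms(3)[OF V(1)] unfolding liftable_def by blast
  obtain W where W: "W \<in> \<W>" "x \<in> W"
    using cover assms(1) V(2) by blast
  obtain q where q: "q \<in> W" "f q = p"
    using onto[OF W(1)] p(1) by blast
  have "W \<in> \<U>"
    using W(1) \<open>\<W> \<subseteq> \<U>\<close> by blast
  moreover have "q \<in> {q \<in> topspace X. f q \<in> F}"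
    using assms(4)[OF \<open>W \<in> \<U>\<close>] p(2) q by blast
  ultimately show ?thesis
    using q(1) W(2) by (rule St_memI)
qed

lemma finite_preimage_finite_fibres:
  assumes "finite F" and "F \<subseteq> topspace Y"
    and "\<And>y. y \<in> topspace Y \<Longrightarrow> finite {x \<in> topspace X. f x = y}"
  shows "finite {x \<in> topspace X. f x \<in> F}"
proof -
  have "{x \<in> topspace X. f x \<in> F} = (\<Union>y\<in>F. {x \<in> topspace X. f x = y})"
    by blast
  then show ?thesis
    using assms by (simp add: subset_eq)
qed

theorem theorem3p14:
  fixes X :: "'a topology" and Y :: "'b topology" and f :: "'a \<Rightarrow> 'b"
  assumes "continuous_map X Y f"
    and "f ` topspace X = topspace Y"
    and "open_map X Y f"
    and "closed_map X Y f"
    and "\<And>y. y \<in> topspace Y \<Longrightarrow> finite {x \<in> topspace X. f x = y}"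
    and "set_strongly_star_Hurewicz Y"
  shows "nearly_set_strongly_star_Hurewicz X"
  unfolding nearly_set_strongly_star_Hurewicz_def
proof (intro allI impI)
  fix A and \<U> :: "nat \<Rightarrow> 'a set set"
  assume "A \<noteq> {} \<and> A \<subseteq> topspace X \<and> (\<forall>n. (\<forall>U\<in>\<U> n. openin X U) \<and> \<Union>(\<U> n) = topspace X)"
  then have A: "A \<noteq> {}" "A \<subseteq> topspace X"
    and \<U>_open: "\<And>n U. U \<in> \<U> n \<Longrightarrow> openin X U" and \<U>_cover: "\<And>n. \<Union>(\<U> n) = topspace X"
    by auto
  then have \<U>_subset: "\<And>n U. U \<in> \<U> n \<Longrightarrow> U \<subseteq> topspace X"
    by blast
  define \<V> where "\<V> n = {V. openin Y V \<and> liftable X f (\<U> n) V}" for n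
  have "Y closure_of (f ` A) \<subseteq> \<Union>(\<V> n)" for n
    unfolding \<V>_def
    using liftable_open_sets_cover[OF assms(3,4,5) \<U>_open \<U>_cover]
    by (rule subset_trans[OF closure_of_subset_topspace])
  moreover have "\<forall>V\<in>\<V> n. openin Y V" for n
    unfolding \<V>_def by blast
  moreover have "f ` A \<noteq> {}" "f ` A \<subseteq> topspace Y"
    using A assms(2) by auto
  ultimately have "\<exists>F. (\<forall>n. finite (F n) \<and> F n \<subseteq> Y closure_of (f ` A)) \<and>
      (\<forall>y\<in>f ` A. \<forall>\<^sub>F n in sequentially. y \<in> St (F n) (\<V> n))"
    using assms(6) unfolding set_strongly_star_Hurewicz_def
    by (elim allE[of _ "f ` A"] allE[of _ \<V>]) blast
  then obtain F where F: "\<And>n. finite (F n)" "\<And>n. F n \<subseteq> topspace Y"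
    and star: "\<And>y. y \<in> f ` A \<Longrightarrow> \<forall>\<^sub>F n in sequentially. y \<in> St (F n) (\<V> n)"
    using closure_of_subset_topspace by (metis subset_trans)
  have "finite {q \<in> topspace X. f q \<in> F n}" for n
    using F assms(5) by (rule finite_preimage_finite_fibres)
  moreover have "x \<in> St {q \<in> topspace X. f q \<in> F n} (\<U> n)"
    if "x \<in> A" "f x \<in> St (F n) (\<V> n)" for x n
    using that A(2) unfolding \<V>_def by (intro St_preimage_liftable \<U>_subset) auto
  then have "\<forall>\<^sub>F n in sequentially. x \<in> St {q \<in> topspace X. f q \<in> F n} (\<U> n)"
    if "x \<in> A" for x
    using star[of "f x"] that by (auto elim: eventually_mono)
  ultimately show "\<exists>F. (\<forall>n. finite (F n) \<and> F n \<subseteq> topspace X) \<and>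
      (\<forall>x\<in>A. \<forall>\<^sub>F n in sequentially. x \<in> St (F n) (\<U> n))"
    by (intro exI[of _ "\<lambda>n. {q \<in> topspace X. f q \<in> F n}"]) auto
qed

end
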